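(* Let $\epsilon_{fp},\delta_{fp},\epsilon_{fn},\delta_{fn}\in(0,1)$, $n,m\ge1$, and let $Z_{nm}=(x_1,\dots,x_n)\sim\mathcal D_{nm}^n$ and $Z_{ano}=(x'_1,\dots,x'_m)\sim\mathcal D_{ano}^m$. Let $\hat y_{ad}$ be the combined predictor defined in the context and define its error rate (over non-abstained predictions) $$\mathrm{ERR}=\Pr_{(x,y)\sim\mathcal D}\big(\hat y_{ad}(x)\ne *\ \text{and}\ \hat y_{ad}(x)\ne y\big).$$ Then, with $\epsilon_{ad}=\max(\epsilon_{fp},\epsilon_{fn})$ and $\delta_{ad}=\delta_{fp}+\delta_{fn}$, $$\Pr_{Z_{nm},Z_{ano}}\Big[\hat\tau_{fn}<\hat\tau_{fp}\ \text{ or }\ \mathrm{ERR}\le\epsilon_{ad}\Big]\ \ge\ 1-\delta_{ad},$$ i.e. with probability at least $1-\delta_{ad}$ over the calibration data, whenever $\hat\tau_{fn}\ge\hat\tau_{fp}$ the error rate is at most $\epsilon_{ad}$.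
   Context: Let $\mathcal X$ be a measurable space and $d:\mathcal X\to\mathbb R$ a fixed measurable anomaly-score function (independent of the calibration data). Let $\mathcal D$ be a distribution on $\mathcal X\times\{0,1\}$ (label $1$ = anomaly, $0$ = normal) with $0<\Pr(y=1)<1$; $\mathcal D_{nm}$ and $\mathcal D_{ano}$ are the conditional distributions of $x$ given $y=0$ and $y=1$. Assume the distributions of $d(x)$ under $\mathcal D_{nm}$ and under $\mathcal D_{ano}$ have no atoms. For $N\ge1$, $\epsilon,\delta\in(0,1)$: $F(k;N,\epsilon)=\sum_{i=0}^{k}\binom{N}{i}\epsilon^i(1-\epsilon)^{N-i}$, $F(-1;N,\epsilon)=0$, $k^*(N,\epsilon,\delta)=\max\{k\in\{-1,\dots,N\}:F(k;N,\epsilon)\le\delta\}$. Let $k^*_{fp}=k^*(n,\epsilon_{fp},\delta_{fp})$, $\hat\tau_{fp}$ = the $(k^*_{fp}+1)$-th largest of $d(x_1),\dots,d(x_n)$ ($0$-th largest $=+\infty$); $k^*_{fn}=k^*(m,\epsilon_{fn},\delta_{fn})$, $\hat\tau_{fn}$ = the $(k^*_{fn}+1)$-th smallest of $d(x'_1),\dots,d(x'_m)$ ($0$-th smallest $=-\infty$). Prediction sets: $C_{\hat\tau_{fp}}(x)=\{1\}$ if $d(x)\ge\hat\tau_{fp}$, else $\{0,1\}$; $C_{\hat\tau_{fn}}(x)=\{0,1\}$ if $d(x)\ge\hat\tau_{fn}$, else $\{0\}$. Combined set $C_{ad}(x)=C_{\hat\tau_{fn}}(x)\cap C_{\hat\tau_{fp}}(x)$,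 and $\hat y_{ad}(x)=1$ if $C_{ad}(x)=\{1\}$, $\hat y_{ad}(x)=0$ if $C_{ad}(x)=\{0\}$, and $\hat y_{ad}(x)=*$ (abstain) otherwise. *)

theory Defs
  imports "HOL-Probability.Probability"
begin

text \<open>Labels: True = anomaly (label 1), False = normal (label 0).\<close>

definition binom_cdf :: "int \<Rightarrow> nat \<Rightarrow> real \<Rightarrow> real" where
  "binom_cdf k N eps =
     (\<Sum>i\<in>{i. i \<le> N \<and> int i \<le> k}. real (N choose i) * eps ^ i * (1 - eps) ^ (N - i))"

definition k_star :: "nat \<Rightarrow> real \<Rightarrow> real \<Rightarrow> int" where
  "k_star N eps delta = Max {k \<in> {-1..int N}. binom_cdf k N eps \<le> delta}"

definition kth_largest :: "int \<Rightarrow> real list \<Rightarrow> ereal" where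
  "kth_largest k xs = (if k \<le> 0 then \<infinity> else ereal (rev (sort xs) ! nat (k - 1)))"

definition kth_smallest :: "int \<Rightarrow> real list \<Rightarrow> ereal" where
  "kth_smallest k xs = (if k \<le> 0 then -\<infinity> else ereal (sort xs ! nat (k - 1)))"

definition tau_fp :: "('a \<Rightarrow> real) \<Rightarrow> nat \<Rightarrow> real \<Rightarrow> real \<Rightarrow> (nat \<Rightarrow> 'a) \<Rightarrow> ereal" where
  "tau_fp d n eps delta Z = kth_largest (k_star n eps delta + 1) (map (\<lambda>i. d (Z i)) [0..<n])"

definition tau_fn :: "('a \<Rightarrow> real) \<Rightarrow> nat \<Rightarrow> real \<Rightarrow> real \<Rightarrow> (nat \<Rightarrow> 'a) \<Rightarrow> ereal" where
  "tau_fn d m eps delta Z = kth_smallest (k_star m eps delta + 1) (map (\<lambda>i. d (Z i)) [0..<m])"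

definition C_fp :: "('a \<Rightarrow> real) \<Rightarrow> ereal \<Rightarrow> 'a \<Rightarrow> bool set" where
  "C_fp d t x = (if ereal (d x) \<ge> t then {True} else {False, True})"

definition C_fn :: "('a \<Rightarrow> real) \<Rightarrow> ereal \<Rightarrow> 'a \<Rightarrow> bool set" where
  "C_fn d t x = (if ereal (d x) \<ge> t then {False, True} else {False})"

text \<open>Combined predictor: Some b = predicts label b, None = abstain (*).\<close>
definition y_ad :: "('a \<Rightarrow> real) \<Rightarrow> ereal \<Rightarrow> ereal \<Rightarrow> 'a \<Rightarrow> bool option" where
  "y_ad d tfn tfp x =
     (let C = C_fn d tfn x \<inter> C_fp d tfp x in
      if C = {True} then Some True else if C = {False} then Some False else None)"

definition cond_dist :: "('a \<times> bool) measure \<Rightarrow> 'a measure \<Rightarrow> bool \<Rightarrow> 'a measure" where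
  "cond_dist D M b = distr (uniform_measure D {p \<in> space D. snd p = b}) M fst"

end

theory Submission
  imports Defs
begin

text \<open>
  Choose $t_0$ with $\Pr_{nm}(d \ge t_0) = \epsilon_{fp}$, possible since the score has no atoms.
  The threshold $\hat\tau_{fp}$ falls below $t_0$ only if at most $k^*_{fp}$ of the $n$ normal
  scores reach $t_0$, an event of probability $F(k^*_{fp}; n, \epsilon_{fp}) \le \delta_{fp}$;
  otherwise $\Pr_{nm}(d \ge \hat\tau_{fp}) \le \epsilon_{fp}$. Symmetrically
  $\Pr_{ano}(d < \hat\tau_{fn}) \le \epsilon_{fn}$ except with probability $\delta_{fn}$.
  If $\hat\tau_{fp} \le \hat\tau_{fn}$, the predictor errs only on normal points with
  $d \ge \hat\tau_{fn} \ge \hat\tau_{fp}$ and on anomalies with $d < \hat\tau_{fp} \le \hat\tau_{fn}$,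
  so on both good events the error is at most
  $(1-p)\,\epsilon_{fp} + p\,\epsilon_{fn} \le \max(\epsilon_{fp},\epsilon_{fn})$.
  The two samples are independent, so both good events hold with probability at least
  $(1-\delta_{fp})(1-\delta_{fn}) \ge 1 - \delta_{fp} - \delta_{fn}$.
\<close>

lemma down_closed_sets_borel:
  fixes S :: "'a::{complete_linorder, linorder_topology} set"
  assumes down: "\<And>x y. x \<le> y \<Longrightarrow> y \<in> S \<Longrightarrow> x \<in> S"
  shows "S \<in> sets borel"
proof (cases "Sup S \<in> S")
  case True
  then have "S = {..Sup S}" using down by (auto intro: Sup_upper)
  then show ?thesis by (metis atMost_borel)
next
  case False
  have "S = {..<Sup S}"
  proof (intro equalityI subsetI)
    fix x assume "x \<in> S"
    then show "x \<in> {..<Sup S}" using False Sup_upper[of x S] by (cases "x = Sup S") auto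
  next
    fix x assume "x \<in> {..<Sup S}"
    then obtain y where "y \<in> S" "x < y" by (auto simp: less_Sup_iff)
    then show "x \<in> S" using down less_imp_le by blast
  qed
  then show ?thesis by (metis lessThan_borel)
qed

lemma borel_measurable_mono_complete_linorder:
  fixes f :: "'a::{complete_linorder, linorder_topology} \<Rightarrow> 'b::{linorder_topology, second_countable_topology}"
  assumes "mono f"
  shows "f \<in> borel_measurable borel"
proof (rule borel_measurableI_le)
  fix c
  have "{x. f x \<le> c} \<in> sets borel"
    using assms by (intro down_closed_sets_borel) (auto dest: monoD)
  then show "{x \<in> space borel. f x \<le> c} \<in> sets borel" by simp
qed

lemma borel_measurable_antimono_complete_linorder:
  fixes f :: "'a::{complete_linorder, linorder_topology} \<Rightarrow> 'b::{linorder_topology, second_countable_topology}"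
  assumes "antimono f"
  shows "f \<in> borel_measurable borel"
proof (rule borel_measurableI_ge)
  fix c
  have "{x. c \<le> f x} \<in> sets borel"
    using assms by (intro down_closed_sets_borel) (auto dest: antimonoD intro: order_trans)
  then show "{x \<in> space borel. c \<le> f x} \<in> sets borel" by simp
qed

lemma sorted_nth_iff_count_up_closed:
  fixes ys :: "'a::linorder list"
  assumes "sorted ys" "j < length ys" and up: "\<And>v w. v \<le> w \<Longrightarrow> Q v \<Longrightarrow> Q w"
  shows "Q (ys ! j) \<longleftrightarrow> length ys - j \<le> length (filter Q ys)"
  using assms(1,2)
proof (induction ys arbitrary: j)
  case Nil then show ?case by simp
next
  case (Cons y ys)
  show ?case
  proof (cases "Q y")
    case True
    have all: "\<forall>v\<in>set (y # ys). Q v"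
    proof
      fix v assume "v \<in> set (y # ys)"
      then have "y \<le> v" using Cons.prems(1) by auto
      then show "Q v" using up True by blast
    qed
    then have "Q ((y # ys) ! j)" using Cons.prems(2) by (meson nth_mem)
    moreover have "filter Q (y # ys) = y # ys" using all by (simp add: filter_id_conv)
    ultimately show ?thesis by simp
  next
    case False
    show ?thesis
    proof (cases j)
      case 0
      then show ?thesis using False length_filter_le[of Q ys] by (simp add: not_le le_imp_less_Suc)
    next
      case (Suc i)
      then have "i < length ys" "sorted ys" using Cons.prems by auto
      then show ?thesis using Cons.IH[of i] False Suc by simp
    qed
  qed
qed

lemma kth_largest_ge_iff:
  fixes xs :: "real list"
  assumes "-1 \<le> k" "k < int (length xs)"
  shows "t \<le> kth_largest (k + 1) xs \<longleftrightarrow> k + 1 \<le> int (length (filter (\<lambda>v. t \<le> ereal v) xs))"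
proof (cases "k = -1")
  case False
  let ?ys = "sort xs" and ?j = "length xs - 1 - nat k"
  have "kth_largest (k + 1) xs = ereal (?ys ! ?j)"
    using assms False by (simp add: kth_largest_def rev_nth)
  moreover have "length (filter (\<lambda>v. t \<le> ereal v) ?ys) = length (filter (\<lambda>v. t \<le> ereal v) xs)"
    by (metis mset_filter mset_sort size_mset)
  moreover have "t \<le> ereal (?ys ! ?j) \<longleftrightarrow> length ?ys - ?j \<le> length (filter (\<lambda>v. t \<le> ereal v) ?ys)"
    using assms False by (intro sorted_nth_iff_count_up_closed) (auto intro: order_trans)
  ultimately show ?thesis using assms False by auto
qed (simp add: kth_largest_def)

lemma kth_smallest_le_iff:
  fixes xs :: "real list"
  assumes "-1 \<le> k" "k < int (length xs)"
  shows "kth_smallest (k + 1) xs \<le> t \<longleftrightarrow> k + 1 \<le> int (length (filter (\<lambda>v. ereal v \<le> t) xs))"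
proof (cases "k = -1")
  case False
  let ?ys = "sort xs" and ?P = "\<lambda>v. ereal v \<le> t"
  let ?Q = "\<lambda>v. \<not> ?P v"
  have "kth_smallest (k + 1) xs = ereal (?ys ! nat k)"
    using assms False by (simp add: kth_smallest_def)
  moreover have "length (filter ?P ?ys) = length (filter ?P xs)"
    by (metis mset_filter mset_sort size_mset)
  moreover have "length (filter ?P ?ys) + length (filter ?Q ?ys) = length xs"
    using sum_length_filter_compl[of ?P ?ys] by simp
  moreover have "?Q (?ys ! nat k) \<longleftrightarrow> length ?ys - nat k \<le> length (filter ?Q ?ys)"
    using assms False by (intro sorted_nth_iff_count_up_closed) (auto simp: not_le intro: less_le_trans)
  ultimately show ?thesis using assms False by (simp only: length_sort) linarith
qed (simp add: kth_smallest_def)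

lemma kth_largest_sample_ge_iff:
  fixes f :: "nat \<Rightarrow> real"
  assumes "-1 \<le> k" "k < int n"
  shows "t \<le> kth_largest (k + 1) (map f [0..<n]) \<longleftrightarrow> k + 1 \<le> int (card {i. i < n \<and> t \<le> ereal (f i)})"
  using kth_largest_ge_iff[of k "map f [0..<n]" t] assms by (simp add: length_filter_conv_card cong: conj_cong)

lemma kth_smallest_sample_le_iff:
  fixes f :: "nat \<Rightarrow> real"
  assumes "-1 \<le> k" "k < int n"
  shows "kth_smallest (k + 1) (map f [0..<n]) \<le> t \<longleftrightarrow> k + 1 \<le> int (card {i. i < n \<and> ereal (f i) \<le> t})"
  using kth_smallest_le_iff[of k "map f [0..<n]" t] assms by (simp add: length_filter_conv_card cong: conj_cong)

lemma pred_card_sample_ge: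
  fixes n :: nat and k :: int
  assumes [measurable]: "Measurable.pred P Q"
  shows "Measurable.pred (PiM {0..<n} (\<lambda>_. P)) (\<lambda>Z. k \<le> int (card {i. i < n \<and> Q (Z i)}))"
proof -
  have "real (card {i. i < n \<and> Q (Z i)}) = (\<Sum>i<n. of_bool (Q (Z i)))" for Z
    by (subst sum_of_bool_eq) (auto simp: Int_def)
  moreover have "Measurable.pred (PiM {0..<n} (\<lambda>_. P)) (\<lambda>Z. real_of_int k \<le> (\<Sum>i<n. of_bool (Q (Z i))))"
    by measurable
  ultimately show ?thesis
    using of_int_le_iff[of k "int c" for c, where 'a=real] by simp
qed

lemma borel_measurable_kth_largest_sample:
  fixes s :: "'a \<Rightarrow> real" and n :: nat
  assumes [measurable]: "s \<in> borel_measurable P" and k: "-1 \<le> k" "k < int n"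
  shows "(\<lambda>Z. kth_largest (k + 1) (map (\<lambda>i. s (Z i)) [0..<n])) \<in> borel_measurable (PiM {0..<n} (\<lambda>_. P))"
    (is "?tau \<in> borel_measurable ?PM")
proof (rule borel_measurableI_ge)
  fix t
  have "Measurable.pred P (\<lambda>x. t \<le> ereal (s x))" by measurable
  note [measurable] = pred_card_sample_ge[OF this, where n=n and k="k + 1"]
  have "{Z \<in> space ?PM. t \<le> ?tau Z} = {Z \<in> space ?PM. k + 1 \<le> int (card {i. i < n \<and> t \<le> ereal (s (Z i))})}"
    using kth_largest_sample_ge_iff[OF k] by simp
  also have "\<dots> \<in> sets ?PM" by measurable
  finally show "{Z \<in> space ?PM. t \<le> ?tau Z} \<in> sets ?PM" .
qed

lemma borel_measurable_kth_smallest_sample: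
  fixes s :: "'a \<Rightarrow> real" and n :: nat
  assumes [measurable]: "s \<in> borel_measurable P" and k: "-1 \<le> k" "k < int n"
  shows "(\<lambda>Z. kth_smallest (k + 1) (map (\<lambda>i. s (Z i)) [0..<n])) \<in> borel_measurable (PiM {0..<n} (\<lambda>_. P))"
    (is "?tau \<in> borel_measurable ?PM")
proof (rule borel_measurableI_le)
  fix t
  have "Measurable.pred P (\<lambda>x. ereal (s x) \<le> t)" by measurable
  note [measurable] = pred_card_sample_ge[OF this, where n=n and k="k + 1"]
  have "{Z \<in> space ?PM. ?tau Z \<le> t} = {Z \<in> space ?PM. k + 1 \<le> int (card {i. i < n \<and> ereal (s (Z i)) \<le> t})}"
    using kth_smallest_sample_le_iff[OF k] by simp
  also have "\<dots> \<in> sets ?PM" by measurable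
  finally show "{Z \<in> space ?PM. ?tau Z \<le> t} \<in> sets ?PM" .
qed

lemma binom_cdf_eq_sum_subsets:
  "binom_cdf k n p = (\<Sum>S | S \<subseteq> {0..<n} \<and> int (card S) \<le> k. p ^ card S * (1 - p) ^ (n - card S))"
proof -
  define J where "J = {j. j \<le> n \<and> int j \<le> k}"
  define G where "G j = {S. S \<subseteq> {0..<n} \<and> card S = j}" for j
  have fin: "finite (G j)" for j
    unfolding G_def by (rule finite_subset[of _ "Pow {0..<n}"]) auto
  have UN: "{S. S \<subseteq> {0..<n} \<and> int (card S) \<le> k} = (\<Union>j\<in>J. G j)"
    unfolding J_def G_def using card_mono[of "{0..<n}"] by fastforce
  have "(\<Sum>S | S \<subseteq> {0..<n} \<and> int (card S) \<le> k. p ^ card S * (1 - p) ^ (n - card S))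
      = (\<Sum>j\<in>J. \<Sum>S\<in>G j. p ^ card S * (1 - p) ^ (n - card S))"
    unfolding UN by (rule sum.UNION_disjoint) (auto simp: fin J_def G_def)
  also have "\<dots> = (\<Sum>j\<in>J. real (n choose j) * p ^ j * (1 - p) ^ (n - j))"
    using n_subsets[of "{0..<n}"] by (intro sum.cong refl) (simp add: G_def)
  finally show ?thesis unfolding binom_cdf_def J_def by simp
qed

lemma k_star_bounds:
  assumes "0 < delta" "delta < 1"
  shows "-1 \<le> k_star N eps delta" "k_star N eps delta < int N" "binom_cdf (k_star N eps delta) N eps \<le> delta"
proof -
  let ?K = "{k \<in> {-1..int N}. binom_cdf k N eps \<le> delta}"
  have "binom_cdf (-1) N eps = 0"
    by (simp add: binom_cdf_def)
  then have "-1 \<in> ?K" using assms by simp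
  moreover have "finite ?K"
    by (rule finite_subset[of _ "{-1..int N}"]) auto
  ultimately have "k_star N eps delta \<in> ?K"
    unfolding k_star_def by (intro Max_in) auto
  moreover have "binom_cdf (int N) N eps = 1"
    using binomial_ring[of eps "1 - eps" N] by (simp add: binom_cdf_def atMost_def)
  ultimately show "-1 \<le> k_star N eps delta" "k_star N eps delta < int N"
    "binom_cdf (k_star N eps delta) N eps \<le> delta"
    using assms by (auto simp: le_less)
qed

lemma borel_measurable_tau_fp:
  assumes "s \<in> borel_measurable P" "0 < delta" "delta < 1"
  shows "tau_fp s n eps delta \<in> borel_measurable (PiM {0..<n} (\<lambda>_. P))"
  unfolding tau_fp_def using assms k_star_bounds[of delta n eps]
  by (intro borel_measurable_kth_largest_sample) auto

lemma borel_measurable_tau_fn: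
  assumes "s \<in> borel_measurable P" "0 < delta" "delta < 1"
  shows "tau_fn s n eps delta \<in> borel_measurable (PiM {0..<n} (\<lambda>_. P))"
  unfolding tau_fn_def using assms k_star_bounds[of delta n eps]
  by (intro borel_measurable_kth_smallest_sample) auto

lemma measure_PiM_count_le:
  assumes P: "prob_space P" and A: "A \<in> sets P"
  shows "measure (PiM {0..<n} (\<lambda>_. P)) {Z \<in> space (PiM {0..<n} (\<lambda>_. P)). int (card {i. i < n \<and> Z i \<in> A}) \<le> k}
    = binom_cdf k n (measure P A)"
proof -
  interpret P: prob_space P by fact
  interpret product_sigma_finite "\<lambda>_. P"
    by (simp add: product_sigma_finite_def prob_space_imp_sigma_finite P)
  interpret PM: prob_space "PiM {0..<n} (\<lambda>_. P)" by (rule prob_space_PiM) (rule P)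
  let ?PM = "PiM {0..<n} (\<lambda>_. P)" and ?p = "measure P A"
  define F where "F = {S. S \<subseteq> {0..<n} \<and> int (card S) \<le> k}"
  define B where "B S i = (if i \<in> S then A else space P - A)" for S and i :: nat
  have B: "B S i \<in> sets P" for S i
    using A by (simp add: B_def)
  have box_iff: "Z \<in> PiE {0..<n} (B S) \<longleftrightarrow> Z \<in> space ?PM \<and> {i. i < n \<and> Z i \<in> A} = S"
    if "S \<subseteq> {0..<n}" for Z S
    using that sets.sets_into_space[OF A] by (auto simp: B_def space_PiM PiE_iff split: if_splits)
  have UN: "{Z \<in> space ?PM. int (card {i. i < n \<and> Z i \<in> A}) \<le> k} = (\<Union>S\<in>F. PiE {0..<n} (B S))"
    by (auto simp: F_def box_iff)
  have disj: "disjoint_family_on (\<lambda>S. PiE {0..<n} (B S)) F"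
    by (auto simp: disjoint_family_on_def F_def box_iff)
  have fin: "finite F"
    unfolding F_def by (rule finite_subset[of _ "Pow {0..<n}"]) auto
  have box: "measure ?PM (PiE {0..<n} (B S)) = ?p ^ card S * (1 - ?p) ^ (n - card S)"
    if "S \<in> F" for S
  proof -
    have "emeasure ?PM (PiE {0..<n} (B S)) = ennreal (\<Prod>i\<in>{0..<n}. measure P (B S i))"
      using B by (simp add: emeasure_PiM P.emeasure_eq_measure prod_ennreal)
    then have "measure ?PM (PiE {0..<n} (B S)) = (\<Prod>i\<in>{0..<n}. measure P (B S i))"
      by (simp add: measure_def prod_nonneg)
    also have "\<dots> = (\<Prod>i\<in>{0..<n}. if i \<in> S then ?p else 1 - ?p)"
      by (intro prod.cong refl) (simp add: B_def P.prob_compl A)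
    also have "\<dots> = ?p ^ card S * (1 - ?p) ^ card ({0..<n} - S)"
      using that by (simp add: prod.If_cases F_def Int_absorb1 Diff_eq[symmetric])
    also have "card ({0..<n} - S) = n - card S"
      using that card_Diff_subset[of S "{0..<n}"] finite_subset[of S "{0..<n}"] by (simp add: F_def)
    finally show ?thesis .
  qed
  have "measure ?PM (\<Union>S\<in>F. PiE {0..<n} (B S)) = (\<Sum>S\<in>F. measure ?PM (PiE {0..<n} (B S)))"
    using fin disj B by (intro measure_finite_Union) (auto simp: sets_PiM_I_finite PM.emeasure_eq_measure)
  also have "\<dots> = binom_cdf k n ?p"
    by (simp add: box binom_cdf_eq_sum_subsets F_def)
  finally show ?thesis unfolding UN .
qed

lemma measure_PiM_ge_of_count_gt:
  fixes n :: nat and k :: int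
  assumes P: "prob_space P" and A [measurable]: "A \<in> sets P"
    and Good: "Good \<in> sets (PiM {0..<n} (\<lambda>_. P))"
    and binom: "binom_cdf k n (measure P A) \<le> delta"
    and count_gt: "\<And>Z. Z \<in> space (PiM {0..<n} (\<lambda>_. P)) \<Longrightarrow> k < int (card {i. i < n \<and> Z i \<in> A}) \<Longrightarrow> Z \<in> Good"
  shows "1 - delta \<le> measure (PiM {0..<n} (\<lambda>_. P)) Good"
proof -
  let ?PM = "PiM {0..<n} (\<lambda>_. P)"
  interpret PM: prob_space ?PM by (rule prob_space_PiM) (rule P)
  define C where "C = {Z \<in> space ?PM. int (card {i. i < n \<and> Z i \<in> A}) \<le> k}"
  have "Measurable.pred P (\<lambda>x. x \<in> A)" by measurable
  note [measurable] = pred_card_sample_ge[OF this, where n=n and k="k + 1"]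
  have "C = space ?PM - {Z \<in> space ?PM. k + 1 \<le> int (card {i. i < n \<and> Z i \<in> A})}"
    unfolding C_def by auto
  also have "\<dots> \<in> sets ?PM" by measurable
  finally have C: "C \<in> sets ?PM" .
  have "PM.prob (space ?PM - C) \<le> PM.prob Good"
    using count_gt Good by (intro PM.finite_measure_mono) (force simp: C_def not_le)
  moreover have "PM.prob C \<le> delta"
    using measure_PiM_count_le[OF P A] binom by (simp add: C_def)
  ultimately show ?thesis
    using PM.prob_compl[OF C] by linarith
qed

lemma (in prob_space) exists_prob_le_eq:
  fixes s :: "'a \<Rightarrow> real"
  assumes s: "s \<in> borel_measurable M"
    and no_atoms: "\<And>t. prob {x \<in> space M. s x = t} = 0"
    and c: "0 < c" "c < 1"
  shows "\<exists>t. prob {x \<in> space M. s x \<le> t} = c"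
proof -
  interpret mu: real_distribution "distr M borel s" using s by simp
  have cdf_eq: "cdf (distr M borel s) t = prob {x \<in> space M. s x \<le> t}" for t
    unfolding cdf_def using s by (subst measure_distr) (auto intro!: arg_cong[where f=prob])
  have "isCont (cdf (distr M borel s)) t" for t
    using no_atoms[of t] s mu.isCont_cdf by (subst (asm) measure_distr) (auto simp: vimage_def Int_def conj_commute)
  moreover obtain a where "cdf (distr M borel s) a < c"
    using mu.cdf_lim_at_bot c order_tendstoD(2) eventually_at_bot_linorder by (metis order_refl)
  moreover obtain b where "a \<le> b" "c < cdf (distr M borel s) b"
    using mu.cdf_lim_at_top_prob c order_tendstoD(1) eventually_at_top_linorder
    by (metis max.cobounded1 max.cobounded2)
  ultimately obtain t where "cdf (distr M borel s) t = c"
    using IVT'[of "cdf (distr M borel s)" a c b] by (force simp: continuous_at_imp_continuous_on)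
  then show ?thesis using cdf_eq by auto
qed

lemma (in prob_space) prob_ge_eq_1_minus_prob_le:
  fixes s :: "'a \<Rightarrow> real"
  assumes [measurable]: "s \<in> borel_measurable M"
    and no_atom: "prob {x \<in> space M. s x = t} = 0"
  shows "prob {x \<in> space M. t \<le> s x} = 1 - prob {x \<in> space M. s x \<le> t}"
proof -
  have "{x \<in> space M. t \<le> s x} = (space M - {x \<in> space M. s x \<le> t}) \<union> {x \<in> space M. s x = t}"
    by auto
  then have "prob {x \<in> space M. t \<le> s x} \<le> 1 - prob {x \<in> space M. s x \<le> t}"
    using measure_Un_le[where M=M and A="space M - {x \<in> space M. s x \<le> t}" and B="{x \<in> space M. s x = t}"]
    by (simp add: prob_compl no_atom)
  moreover have "prob (space M - {x \<in> space M. s x \<le> t}) \<le> prob {x \<in> space M. t \<le> s x}"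
    by (intro finite_measure_mono) auto
  then have "1 - prob {x \<in> space M. s x \<le> t} \<le> prob {x \<in> space M. t \<le> s x}"
    by (simp add: prob_compl)
  ultimately show ?thesis by linarith
qed

lemma (in finite_measure) antimono_measure_ge:
  fixes s :: "'a \<Rightarrow> real"
  assumes [measurable]: "s \<in> borel_measurable M"
  shows "antimono (\<lambda>t. measure M {x \<in> space M. t \<le> ereal (s x)})"
  by (intro antimonoI finite_measure_mono) (auto intro: order_trans)

lemma (in finite_measure) mono_measure_less:
  fixes s :: "'a \<Rightarrow> real"
  assumes [measurable]: "s \<in> borel_measurable M"
  shows "mono (\<lambda>t. measure M {x \<in> space M. ereal (s x) < t})"
  by (intro monoI finite_measure_mono) (auto intro: less_le_trans)

lemma tau_fp_guarantee:
  fixes s :: "'a \<Rightarrow> real" and n :: nat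
  assumes P: "prob_space P" and s [measurable]: "s \<in> borel_measurable P"
    and no_atoms: "\<And>t. measure P {x \<in> space P. s x = t} = 0"
    and eps: "0 < eps" "eps < 1" and delta: "0 < delta" "delta < 1"
  defines "Good \<equiv> {Z \<in> space (PiM {0..<n} (\<lambda>_. P)).
    measure P {x \<in> space P. tau_fp s n eps delta Z \<le> ereal (s x)} \<le> eps}"
  shows "Good \<in> sets (PiM {0..<n} (\<lambda>_. P))" "1 - delta \<le> measure (PiM {0..<n} (\<lambda>_. P)) Good"
proof -
  interpret P: prob_space P by fact
  let ?tau = "tau_fp s n eps delta"
  define k where "k = k_star n eps delta"
  have k: "-1 \<le> k" "k < int n" "binom_cdf k n eps \<le> delta"
    using k_star_bounds[OF delta] unfolding k_def by auto
  define G where "G t = P.prob {x \<in> space P. t \<le> ereal (s x)}" for t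
  have "antimono G"
    unfolding G_def by (rule P.antimono_measure_ge[OF s])
  note [measurable] = borel_measurable_antimono_complete_linorder[OF this]
    borel_measurable_tau_fp[OF s delta]
  show Good_sets: "Good \<in> sets (PiM {0..<n} (\<lambda>_. P))"
    unfolding Good_def G_def[symmetric] by measurable
  obtain t0 where "P.prob {x \<in> space P. s x \<le> t0} = 1 - eps"
    using P.exists_prob_le_eq[OF s no_atoms, of "1 - eps"] eps by auto
  then have G_t0: "G (ereal t0) = eps"
    using P.prob_ge_eq_1_minus_prob_le[OF s no_atoms] by (simp add: G_def)
  define A where "A = {x \<in> space P. t0 \<le> s x}"
  show "1 - delta \<le> measure (PiM {0..<n} (\<lambda>_. P)) Good"
  proof (rule measure_PiM_ge_of_count_gt[OF P _ Good_sets])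
    show "A \<in> sets P" unfolding A_def by measurable
    show "binom_cdf k n (P.prob A) \<le> delta"
      using G_t0 k(3) by (simp add: G_def A_def)
  next
    fix Z assume Z: "Z \<in> space (PiM {0..<n} (\<lambda>_. P))" and "k < int (card {i. i < n \<and> Z i \<in> A})"
    moreover have "{i. i < n \<and> Z i \<in> A} = {i. i < n \<and> ereal t0 \<le> ereal (s (Z i))}"
      using Z by (auto simp: A_def space_PiM PiE_iff)
    ultimately have "ereal t0 \<le> ?tau Z"
      using kth_largest_sample_ge_iff[OF k(1,2)] by (simp add: tau_fp_def k_def)
    then have "G (?tau Z) \<le> eps"
      using \<open>antimono G\<close> G_t0 by (metis antimonoD)
    then show "Z \<in> Good" using Z by (simp add: Good_def G_def)
  qed
qed

lemma tau_fn_guarantee: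
  fixes s :: "'a \<Rightarrow> real" and n :: nat
  assumes P: "prob_space P" and s [measurable]: "s \<in> borel_measurable P"
    and no_atoms: "\<And>t. measure P {x \<in> space P. s x = t} = 0"
    and eps: "0 < eps" "eps < 1" and delta: "0 < delta" "delta < 1"
  defines "Good \<equiv> {Z \<in> space (PiM {0..<n} (\<lambda>_. P)).
    measure P {x \<in> space P. ereal (s x) < tau_fn s n eps delta Z} \<le> eps}"
  shows "Good \<in> sets (PiM {0..<n} (\<lambda>_. P))" "1 - delta \<le> measure (PiM {0..<n} (\<lambda>_. P)) Good"
proof -
  interpret P: prob_space P by fact
  let ?tau = "tau_fn s n eps delta"
  define k where "k = k_star n eps delta"
  have k: "-1 \<le> k" "k < int n" "binom_cdf k n eps \<le> delta"
    using k_star_bounds[OF delta] unfolding k_def by auto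
  define H where "H t = P.prob {x \<in> space P. ereal (s x) < t}" for t
  have "mono H"
    unfolding H_def by (rule P.mono_measure_less[OF s])
  note [measurable] = borel_measurable_mono_complete_linorder[OF this]
    borel_measurable_tau_fn[OF s delta]
  show Good_sets: "Good \<in> sets (PiM {0..<n} (\<lambda>_. P))"
    unfolding Good_def H_def[symmetric] by measurable
  obtain t0 where t0: "P.prob {x \<in> space P. s x \<le> t0} = eps"
    using P.exists_prob_le_eq[OF s no_atoms] eps by auto
  define A where "A = {x \<in> space P. s x \<le> t0}"
  show "1 - delta \<le> measure (PiM {0..<n} (\<lambda>_. P)) Good"
  proof (rule measure_PiM_ge_of_count_gt[OF P _ Good_sets])
    show "A \<in> sets P" unfolding A_def by measurable
    show "binom_cdf k n (P.prob A) \<le> delta"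
      using t0 k(3) by (simp add: A_def)
  next
    fix Z assume Z: "Z \<in> space (PiM {0..<n} (\<lambda>_. P))" and "k < int (card {i. i < n \<and> Z i \<in> A})"
    moreover have "{i. i < n \<and> Z i \<in> A} = {i. i < n \<and> ereal (s (Z i)) \<le> ereal t0}"
      using Z by (auto simp: A_def space_PiM PiE_iff)
    ultimately have "?tau Z \<le> ereal t0"
      using kth_smallest_sample_le_iff[OF k(1,2)] by (simp add: tau_fn_def k_def)
    then have "H (?tau Z) \<le> H (ereal t0)"
      using \<open>mono H\<close> by (metis monoD)
    also have "\<dots> \<le> P.prob A"
      unfolding H_def A_def by (intro P.finite_measure_mono) auto
    finally show "Z \<in> Good" using Z t0 by (simp add: Good_def H_def A_def)
  qed
qed

lemma space_cond_dist [simp]: "space (cond_dist D M b) = space M"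
  and sets_cond_dist [simp]: "sets (cond_dist D M b) = sets M"
  by (simp_all add: cond_dist_def)

lemma label_weights:
  fixes D :: "('a \<times> bool) measure" and M :: "'a measure"
  assumes "prob_space D" and D_sets: "sets D = sets (M \<Otimes>\<^sub>M count_space UNIV)"
  shows "measure D {p \<in> space D. snd p = False} + measure D {p \<in> space D. snd p = True} = 1"
proof -
  interpret D: prob_space D by fact
  have [measurable]: "snd \<in> D \<rightarrow>\<^sub>M count_space UNIV"
    by (simp add: measurable_cong_sets[OF D_sets refl])
  have "{p \<in> space D. snd p = False} = space D - {p \<in> space D. snd p}" by auto
  then show ?thesis by (simp add: D.prob_compl)
qed

lemma
  fixes D :: "('a \<times> bool) measure" and M :: "'a measure"
  assumes D: "prob_space D" and D_sets: "sets D = sets (M \<Otimes>\<^sub>M count_space UNIV)"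
    and pos: "0 < measure D {p \<in> space D. snd p = b}"
  shows prob_space_cond_dist: "prob_space (cond_dist D M b)"
    and measure_label_fst: "B \<in> sets M \<Longrightarrow> measure D {p \<in> space D. snd p = b \<and> fst p \<in> B}
      = measure D {p \<in> space D. snd p = b} * measure (cond_dist D M b) B"
proof -
  interpret D: prob_space D by fact
  let ?S = "{p \<in> space D. snd p = b}"
  have [measurable]: "fst \<in> D \<rightarrow>\<^sub>M M" "snd \<in> D \<rightarrow>\<^sub>M count_space UNIV"
    by (simp_all add: measurable_cong_sets[OF D_sets refl])
  have S: "?S \<in> sets D" by measurable
  have S_fin: "emeasure D ?S \<noteq> 0" "emeasure D ?S \<noteq> \<infinity>"
    using pos by (simp_all add: D.emeasure_eq_measure)
  interpret U: prob_space "uniform_measure D ?S"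
    by (rule prob_space_uniform_measure[OF S_fin])
  have fst_U: "fst \<in> uniform_measure D ?S \<rightarrow>\<^sub>M M"
    by (simp add: measurable_cong_sets[OF sets_uniform_measure refl])
  show "prob_space (cond_dist D M b)"
    unfolding cond_dist_def by (rule U.prob_space_distr[OF fst_U])
  assume B: "B \<in> sets M"
  have "measure (cond_dist D M b) B = measure (uniform_measure D ?S) (fst -` B \<inter> space D)"
    unfolding cond_dist_def using fst_U B by (simp add: measure_distr)
  also have "\<dots> = measure D (?S \<inter> (fst -` B \<inter> space D)) / measure D ?S"
    using B by (intro measure_uniform_measure[OF S_fin]) measurable
  also have "?S \<inter> (fst -` B \<inter> space D) = {p \<in> space D. snd p = b \<and> fst p \<in> B}"
    by auto
  finally show "measure D {p \<in> space D. snd p = b \<and> fst p \<in> B} = measure D ?S * measure (cond_dist D M b) B"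
    using pos by simp
qed

lemma y_ad_ordered_thresholds:
  assumes "tfp \<le> tfn"
  shows "y_ad d tfn tfp x
    = (if tfn \<le> ereal (d x) then Some True else if ereal (d x) < tfp then Some False else None)"
  using assms order_trans[of tfp tfn "ereal (d x)"]
  by (auto simp: y_ad_def C_fn_def C_fp_def Let_def not_le)

lemma error_rate_eq:
  fixes D :: "('a \<times> bool) measure" and M :: "'a measure" and d :: "'a \<Rightarrow> real"
  assumes D: "prob_space D" and D_sets: "sets D = sets (M \<Otimes>\<^sub>M count_space UNIV)"
    and d [measurable]: "d \<in> borel_measurable M"
    and pos: "\<And>b. 0 < measure D {p \<in> space D. snd p = b}"
    and ordered: "tfp \<le> tfn"
  shows "measure D {(x, y) \<in> space D. y_ad d tfn tfp x \<noteq> None \<and> y_ad d tfn tfp x \<noteq> Some y}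
    = measure D {p \<in> space D. snd p = False} * measure (cond_dist D M False) {x \<in> space M. tfn \<le> ereal (d x)}
    + measure D {p \<in> space D. snd p = True} * measure (cond_dist D M True) {x \<in> space M. ereal (d x) < tfp}"
proof -
  interpret D: prob_space D by fact
  have [measurable]: "fst \<in> D \<rightarrow>\<^sub>M M" "snd \<in> D \<rightarrow>\<^sub>M count_space UNIV"
    by (simp_all add: measurable_cong_sets[OF D_sets refl])
  define FP where "FP = {p \<in> space D. snd p = False \<and> fst p \<in> {x \<in> space M. tfn \<le> ereal (d x)}}"
  define FN where "FN = {p \<in> space D. snd p = True \<and> fst p \<in> {x \<in> space M. ereal (d x) < tfp}}"
  have "{(x, y) \<in> space D. y_ad d tfn tfp x \<noteq> None \<and> y_ad d tfn tfp x \<noteq> Some y} = FP \<union> FN"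
    using ordered measurable_space[of fst D M]
    by (auto simp: FP_def FN_def y_ad_ordered_thresholds split: if_splits dest: order.strict_trans2)
  moreover have "FP \<inter> FN = {}" by (auto simp: FP_def FN_def)
  moreover have "FP \<in> sets D" "FN \<in> sets D" unfolding FP_def FN_def by measurable
  ultimately have "measure D {(x, y) \<in> space D. y_ad d tfn tfp x \<noteq> None \<and> y_ad d tfn tfp x \<noteq> Some y}
      = measure D FP + measure D FN"
    by (simp add: D.finite_measure_Union)
  also have "measure D FP = measure D {p \<in> space D. snd p = False}
      * measure (cond_dist D M False) {x \<in> space M. tfn \<le> ereal (d x)}"
    unfolding FP_def by (rule measure_label_fst[OF D D_sets pos]) measurable
  also have "measure D FN = measure D {p \<in> space D. snd p = True}
      * measure (cond_dist D M True) {x \<in> space M. ereal (d x) < tfp}"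
    unfolding FN_def by (rule measure_label_fst[OF D D_sets pos]) measurable
  finally show ?thesis .
qed

lemma measure_pair_threshold_event:
  fixes tp :: "'a \<Rightarrow> ereal" and tn :: "'b \<Rightarrow> ereal" and F G :: "ereal \<Rightarrow> real"
  assumes Q0: "prob_space Q0" and Q1: "prob_space Q1"
    and [measurable]: "tp \<in> borel_measurable Q0" "tn \<in> borel_measurable Q1"
    and F: "antimono F" and G: "mono G" and w: "0 \<le> p" "0 \<le> q"
    and A: "A \<in> sets Q0" "1 - \<alpha> \<le> measure Q0 A" "\<And>Z. Z \<in> A \<Longrightarrow> F (tp Z) \<le> a"
    and B: "B \<in> sets Q1" "1 - \<beta> \<le> measure Q1 B" "\<And>Z'. Z' \<in> B \<Longrightarrow> G (tn Z') \<le> b"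
    and r: "p * a + q * b \<le> r"
  shows "1 - (\<alpha> + \<beta>) \<le> measure (Q0 \<Otimes>\<^sub>M Q1)
    {(Z, Z') \<in> space (Q0 \<Otimes>\<^sub>M Q1). tn Z' < tp Z \<or> p * F (tn Z') + q * G (tp Z) \<le> r}"
    (is "_ \<le> measure _ ?E")
proof -
  interpret Q0: prob_space Q0 by fact
  interpret Q1: prob_space Q1 by fact
  interpret pair_prob_space Q0 Q1 ..
  note [measurable] = borel_measurable_antimono_complete_linorder[OF F]
    borel_measurable_mono_complete_linorder[OF G]
  have "?E = {w \<in> space (Q0 \<Otimes>\<^sub>M Q1).
      tn (snd w) < tp (fst w) \<or> p * F (tn (snd w)) + q * G (tp (fst w)) \<le> r}"
    by auto
  also have "\<dots> \<in> sets (Q0 \<Otimes>\<^sub>M Q1)" by measurable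
  finally have E: "?E \<in> sets (Q0 \<Otimes>\<^sub>M Q1)" .
  have "(Z, Z') \<in> ?E" if Z: "Z \<in> A" and Z': "Z' \<in> B" for Z Z'
  proof -
    have "(Z, Z') \<in> space (Q0 \<Otimes>\<^sub>M Q1)"
      using Z Z' sets.sets_into_space[OF A(1)] sets.sets_into_space[OF B(1)]
      by (auto simp: space_pair_measure)
    moreover have "tn Z' < tp Z \<or> p * F (tn Z') + q * G (tp Z) \<le> r"
    proof (cases "tn Z' < tp Z")
      case False
      then have "F (tn Z') \<le> a" "G (tp Z) \<le> b"
        using antimonoD[OF F] monoD[OF G] A(3)[OF Z] B(3)[OF Z'] by (meson not_less order_trans)+
      then have "p * F (tn Z') \<le> p * a" "q * G (tp Z) \<le> q * b"
        using w by (simp_all add: mult_left_mono)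
      then show ?thesis using r by linarith
    qed simp
    ultimately show ?thesis by simp
  qed
  then have "A \<times> B \<subseteq> ?E" by auto
  then have "measure (Q0 \<Otimes>\<^sub>M Q1) (A \<times> B) \<le> measure (Q0 \<Otimes>\<^sub>M Q1) ?E"
    using E by (intro finite_measure_mono)
  moreover have "emeasure (Q0 \<Otimes>\<^sub>M Q1) (A \<times> B) = emeasure Q0 A * emeasure Q1 B"
    by (rule Q1.emeasure_pair_measure_Times[OF A(1) B(1)])
  then have "measure (Q0 \<Otimes>\<^sub>M Q1) (A \<times> B) = measure Q0 A * measure Q1 B"
    by (simp add: measure_def enn2real_mult)
  moreover have "0 \<le> (1 - measure Q0 A) * (1 - measure Q1 B)"
    by (simp add: Q0.prob_le_1 Q1.prob_le_1)
  ultimately show ?thesis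
    using A(2) B(2) by (simp add: algebra_simps)
qed

theorem mainTheorem6:
  fixes M :: "'a measure" and d :: "'a \<Rightarrow> real" and D :: "('a \<times> bool) measure"
    and eps_fp delta_fp eps_fn delta_fn :: real and n m :: nat
  assumes d_meas: "d \<in> borel_measurable M"
    and D_prob: "prob_space D"
    and D_sets: "sets D = sets (M \<Otimes>\<^sub>M count_space UNIV)"
    and p_ano: "0 < measure D {p \<in> space D. snd p}" "measure D {p \<in> space D. snd p} < 1"
    and no_atoms_nm: "\<And>t. measure (cond_dist D M False) {x \<in> space M. d x = t} = 0"
    and no_atoms_ano: "\<And>t. measure (cond_dist D M True) {x \<in> space M. d x = t} = 0"
    and eps_fp: "0 < eps_fp" "eps_fp < 1" and delta_fp: "0 < delta_fp" "delta_fp < 1"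
    and eps_fn: "0 < eps_fn" "eps_fn < 1" and delta_fn: "0 < delta_fn" "delta_fn < 1"
    and n: "n \<ge> 1" and m: "m \<ge> 1"
  shows "measure (PiM {0..<n} (\<lambda>_. cond_dist D M False) \<Otimes>\<^sub>M PiM {0..<m} (\<lambda>_. cond_dist D M True))
           {(Z, Z') \<in> space (PiM {0..<n} (\<lambda>_. cond_dist D M False) \<Otimes>\<^sub>M PiM {0..<m} (\<lambda>_. cond_dist D M True)).
              tau_fn d m eps_fn delta_fn Z' < tau_fp d n eps_fp delta_fp Z
              \<or> measure D {(x, y) \<in> space D.
                   y_ad d (tau_fn d m eps_fn delta_fn Z') (tau_fp d n eps_fp delta_fp Z) x \<noteq> None
                   \<and> y_ad d (tau_fn d m eps_fn delta_fn Z') (tau_fp d n eps_fp delta_fp Z) x \<noteq> Some y}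
                 \<le> max eps_fp eps_fn}
         \<ge> 1 - (delta_fp + delta_fn)"
proof -
  let ?P0 = "cond_dist D M False" and ?P1 = "cond_dist D M True"
  let ?tp = "tau_fp d n eps_fp delta_fp" and ?tn = "tau_fn d m eps_fn delta_fn"
  let ?w0 = "measure D {p \<in> space D. snd p = False}" and ?w1 = "measure D {p \<in> space D. snd p = True}"
  have weights: "?w0 + ?w1 = 1"
    by (rule label_weights[OF D_prob D_sets])
  then have pos: "0 < measure D {p \<in> space D. snd p = b}" for b
    using p_ano by (cases b) auto
  interpret P0: prob_space ?P0 by (rule prob_space_cond_dist[OF D_prob D_sets pos])
  interpret P1: prob_space ?P1 by (rule prob_space_cond_dist[OF D_prob D_sets pos])
  have d0: "d \<in> borel_measurable ?P0" and d1: "d \<in> borel_measurable ?P1"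
    using d_meas by (simp_all add: measurable_cong_sets[OF sets_cond_dist refl])
  have "\<And>t. P0.prob {x \<in> space ?P0. d x = t} = 0" "\<And>t. P1.prob {x \<in> space ?P1. d x = t} = 0"
    using no_atoms_nm no_atoms_ano by simp_all
  note fp = tau_fp_guarantee[OF P0.prob_space_axioms d0 this(1) eps_fp delta_fp, of n]
    and fn = tau_fn_guarantee[OF P1.prob_space_axioms d1 this(2) eps_fn delta_fn, of m]
  have "?w0 * eps_fp + ?w1 * eps_fn \<le> ?w0 * max eps_fp eps_fn + ?w1 * max eps_fp eps_fn"
    by (intro add_mono mult_left_mono) auto
  also have "\<dots> = max eps_fp eps_fn"
    using weights by (simp flip: distrib_right)
  finally have convex: "?w0 * eps_fp + ?w1 * eps_fn \<le> max eps_fp eps_fn" .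
  have "1 - (delta_fp + delta_fn) \<le> measure (PiM {0..<n} (\<lambda>_. ?P0) \<Otimes>\<^sub>M PiM {0..<m} (\<lambda>_. ?P1))
    {(Z, Z') \<in> space (PiM {0..<n} (\<lambda>_. ?P0) \<Otimes>\<^sub>M PiM {0..<m} (\<lambda>_. ?P1)). ?tn Z' < ?tp Z \<or>
      ?w0 * P0.prob {x \<in> space ?P0. ?tn Z' \<le> ereal (d x)} + ?w1 * P1.prob {x \<in> space ?P1. ereal (d x) < ?tp Z}
      \<le> max eps_fp eps_fn}"
    by (rule measure_pair_threshold_event[OF prob_space_PiM prob_space_PiM
          borel_measurable_tau_fp[OF d0 delta_fp] borel_measurable_tau_fn[OF d1 delta_fn]
          P0.antimono_measure_ge[OF d0] P1.mono_measure_less[OF d1] measure_nonneg measure_nonneg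
          fp(1,2) _ fn(1,2) _ convex])
      (simp_all add: P0.prob_space_axioms P1.prob_space_axioms)
  moreover have "?tn Z' < ?tp Z \<or> ?w0 * P0.prob {x \<in> space ?P0. ?tn Z' \<le> ereal (d x)}
        + ?w1 * P1.prob {x \<in> space ?P1. ereal (d x) < ?tp Z} \<le> max eps_fp eps_fn
      \<longleftrightarrow> ?tn Z' < ?tp Z \<or> measure D {(x, y) \<in> space D.
        y_ad d (?tn Z') (?tp Z) x \<noteq> None \<and> y_ad d (?tn Z') (?tp Z) x \<noteq> Some y} \<le> max eps_fp eps_fn"
    for Z Z'
    using error_rate_eq[OF D_prob D_sets d_meas pos, of "?tp Z" "?tn Z'"] by (cases "?tn Z' < ?tp Z") simp_all
  ultimately show ?thesis by (simp only:)
qed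

end
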